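(* Let $0<\eta\le\gamma$ and let $c$ satisfy \[ 0\le c\le\frac{\sqrt{2|2\eta-\gamma|+\gamma^2+1}-|2\eta-\gamma|-1}{4\eta^2}. \] Let $\epsilon\in[-1,1]$ and let $x$ be a random variable with values in $[-1,1]$ such that $\mathbb E[e^{-\gamma x}]\le e^{\gamma\epsilon}$. Then \[ \mathbb E\big[e^{c\eta^2x^2-\eta x}\big]\;\le\;e^{c\eta^2\epsilon^2+\eta\epsilon}. \] *)

theory Defs
  imports "HOL-Probability.Probability"
begin

end

theory Submission imports Defs begin

text \<open>
  Substitute \<open>y = exp (- \<gamma> x)\<close>: the integrand becomes \<open>g y = exp (A (ln y)\<^sup>2 + B ln y)\<close> with
  \<open>A = c \<eta>\<^sup>2 / \<gamma>\<^sup>2\<close> and \<open>B = \<eta> / \<gamma>\<close>, and the hypothesis reads \<open>E y \<le> y\<^sub>1 = exp (\<gamma> \<epsilon>)\<close>.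
  The bound on \<open>c\<close> is exactly what makes \<open>g\<close> concave on \<open>[exp (- \<gamma>), exp \<gamma>]\<close>, so \<open>g\<close> lies
  below its tangent at \<open>y\<^sub>1\<close>; as \<open>g\<close> is increasing at \<open>y\<^sub>1\<close>, taking expectations gives
  \<open>E g(y) \<le> g y\<^sub>1 + g' y\<^sub>1 (E y - y\<^sub>1) \<le> g y\<^sub>1\<close>.
\<close>

lemma quadratic_le_of_le_sqrt_bound:
  fixes w b g :: real
  assumes "0 \<le> w" "0 \<le> b" "w \<le> sqrt (2 * b + g\<^sup>2 + 1) - b - 1"
  shows "w\<^sup>2 + 2 * w * (1 + b) \<le> g\<^sup>2 - b\<^sup>2"
proof -
  have "(w + b + 1)\<^sup>2 \<le> (sqrt (2 * b + g\<^sup>2 + 1))\<^sup>2"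
    using assms by (intro power_mono) auto
  also have "\<dots> = 2 * b + g\<^sup>2 + 1"
    using assms(2) by simp
  finally show ?thesis
    by (simp add: power2_eq_square algebra_simps)
qed

lemma concavity_condition:
  fixes \<eta> \<gamma> c t :: real
  defines "A \<equiv> c * \<eta>\<^sup>2 / \<gamma>\<^sup>2" and "B \<equiv> \<eta> / \<gamma>"
  assumes "0 < \<eta>" "\<eta> \<le> \<gamma>" "0 \<le> c"
    and "c \<le> (sqrt (2 * \<bar>2 * \<eta> - \<gamma>\<bar> + \<gamma>\<^sup>2 + 1) - \<bar>2 * \<eta> - \<gamma>\<bar> - 1) / (4 * \<eta>\<^sup>2)"
    and "\<bar>t\<bar> \<le> \<gamma>"
  shows "(2 * A * t + B)\<^sup>2 + 2 * A \<le> 2 * A * t + B"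
proof -
  define w where "w = 4 * c * \<eta>\<^sup>2"
  define x where "x = - t / \<gamma>"
  have \<gamma>: "0 < \<gamma>" using assms by simp
  have w: "0 \<le> w" using assms by (simp add: w_def)
  have "w \<le> sqrt (2 * \<bar>2 * \<eta> - \<gamma>\<bar> + \<gamma>\<^sup>2 + 1) - \<bar>2 * \<eta> - \<gamma>\<bar> - 1"
    using assms by (simp add: w_def field_simps)
  then have "w\<^sup>2 + 2 * w * (1 + \<bar>2 * \<eta> - \<gamma>\<bar>) \<le> \<gamma>\<^sup>2 - (2 * \<eta> - \<gamma>)\<^sup>2"
    using quadratic_le_of_le_sqrt_bound[OF w abs_ge_zero] by simp
  moreover have "w\<^sup>2 * x\<^sup>2 \<le> w\<^sup>2"
    using assms \<gamma> by (simp add: x_def abs_square_le_1 mult_left_le divide_le_eq_1 abs_divide)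
  moreover have "w * (x * (\<gamma> - 2 * \<eta>)) \<le> w * \<bar>2 * \<eta> - \<gamma>\<bar>"
  proof (rule mult_left_mono[OF _ w])
    have "\<bar>x\<bar> \<le> 1" using assms \<gamma> by (simp add: x_def abs_divide)
    then have "\<bar>x\<bar> * \<bar>\<gamma> - 2 * \<eta>\<bar> \<le> \<bar>\<gamma> - 2 * \<eta>\<bar>" by (simp add: mult_left_le_one_le)
    then show "x * (\<gamma> - 2 * \<eta>) \<le> \<bar>2 * \<eta> - \<gamma>\<bar>"
      by (metis abs_ge_self abs_minus_commute abs_mult order_trans)
  qed
  ultimately have "w\<^sup>2 * x\<^sup>2 + 2 * w + 2 * w * x * (\<gamma> - 2 * \<eta>) - 4 * \<eta> * (\<gamma> - \<eta>) \<le> 0"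
    by (simp add: power2_eq_square algebra_simps)
  also have "w\<^sup>2 * x\<^sup>2 + 2 * w + 2 * w * x * (\<gamma> - 2 * \<eta>) - 4 * \<eta> * (\<gamma> - \<eta>)
      = ((2 * A * t + B)\<^sup>2 + 2 * A - (2 * A * t + B)) * (4 * \<gamma>\<^sup>2)"
    using \<gamma> by (simp add: A_def B_def w_def x_def field_simps power2_eq_square)
  finally show ?thesis
    using \<gamma> by (simp add: mult_le_0_iff)
qed

lemma f''_le0_imp_f':
  fixes f :: "real \<Rightarrow> real"
  assumes "convex C"
    and "\<And>x. x \<in> C \<Longrightarrow> DERIV f x :> f' x"
    and "\<And>x. x \<in> C \<Longrightarrow> DERIV f' x :> f'' x"
    and "\<And>x. x \<in> C \<Longrightarrow> f'' x \<le> 0"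
    and "x \<in> C" "y \<in> C"
  shows "f y - f x \<le> f' x * (y - x)"
proof -
  have "- f' x * (y - x) \<le> - f y - - f x"
    by (rule f''_imp_f'[of C "\<lambda>x. - f x" "\<lambda>x. - f' x" "\<lambda>x. - f'' x"])
       (use assms in \<open>auto intro: DERIV_minus\<close>)
  then show ?thesis by simp
qed

text \<open>
  With \<open>u = 2 A ln y + B\<close>, the second derivative of \<open>exp (A (ln y)\<^sup>2 + B ln y)\<close> is
  \<open>exp (A (ln y)\<^sup>2 + B ln y) (u\<^sup>2 + 2 A - u) / y\<^sup>2\<close>.
\<close>
lemma exp_quadratic_ln_below_tangent:
  fixes A B a b y y\<^sub>1 :: real
  assumes "0 < a"
    and concave: "\<And>t. ln a \<le> t \<Longrightarrow> t \<le> ln b \<Longrightarrow> (2 * A * t + B)\<^sup>2 + 2 * A \<le> 2 * A * t + B"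
    and "y \<in> {a..b}" "y\<^sub>1 \<in> {a..b}"
  shows "exp (A * (ln y)\<^sup>2 + B * ln y)
    \<le> exp (A * (ln y\<^sub>1)\<^sup>2 + B * ln y\<^sub>1) * (1 + (2 * A * ln y\<^sub>1 + B) / y\<^sub>1 * (y - y\<^sub>1))"
proof -
  define g where "g y = exp (A * (ln y)\<^sup>2 + B * ln y)" for y
  define g' where "g' y = g y * (2 * A * ln y + B) / y" for y
  define g'' where "g'' y = g y * ((2 * A * ln y + B)\<^sup>2 + 2 * A - (2 * A * ln y + B)) / y\<^sup>2" for y
  have pos: "0 < y" if "y \<in> {a..b}" for y
    using that assms(1) by simp
  have "g y - g y\<^sub>1 \<le> g' y\<^sub>1 * (y - y\<^sub>1)"
  proof (rule f''_le0_imp_f'[of "{a..b}" g g' g''])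
    show "DERIV g y :> g' y" if "y \<in> {a..b}" for y
      using pos[OF that] unfolding g_def g'_def
      by (auto intro!: derivative_eq_intros simp: field_simps power2_eq_square)
    show "DERIV g' y :> g'' y" if "y \<in> {a..b}" for y
      using pos[OF that] unfolding g_def g'_def g''_def
      by (auto intro!: derivative_eq_intros simp: field_simps power2_eq_square)
    show "g'' y \<le> 0" if "y \<in> {a..b}" for y
    proof -
      have "ln a \<le> ln y" "ln y \<le> ln b"
        using that pos[OF that] assms(1) by auto
      then show ?thesis
        using concave[of "ln y"] pos[OF that]
        by (auto simp: g''_def g_def intro!: divide_nonpos_pos mult_nonneg_nonpos)
    qed
  qed (use assms in auto)
  then show ?thesis
    by (simp add: g_def g'_def algebra_simps)
qed

lemma (in finite_measure) integrable_continuous_of_bounded: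
  fixes X :: "'a \<Rightarrow> real" and f :: "real \<Rightarrow> real"
  assumes "X \<in> borel_measurable M" "AE \<omega> in M. X \<omega> \<in> {a..b}" "continuous_on UNIV f"
  shows "integrable M (\<lambda>\<omega>. f (X \<omega>))"
proof -
  have "compact (f ` {a..b})"
    using assms(3) by (intro compact_continuous_image) (auto intro: continuous_on_subset)
  then obtain K where K: "\<And>x. x \<in> {a..b} \<Longrightarrow> norm (f x) \<le> K"
    by (meson bounded_iff compact_imp_bounded image_eqI)
  show ?thesis
  proof (rule integrable_const_bound[where B = K])
    show "AE \<omega> in M. norm (f (X \<omega>)) \<le> K"
      using assms(2) by eventually_elim (rule K)
    show "(\<lambda>\<omega>. f (X \<omega>)) \<in> borel_measurable M"
      using borel_measurable_continuous_onI[OF assms(3)] assms(1) by measurable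
  qed
qed

lemma (in prob_space) expectation_le_of_AE_le_tangent:
  fixes Y Z :: "'a \<Rightarrow> real"
  assumes "integrable M Y" "integrable M Z"
    and "AE \<omega> in M. Z \<omega> \<le> K * (1 + D * (Y \<omega> - y\<^sub>1))"
    and "0 \<le> K * D" "expectation Y \<le> y\<^sub>1"
  shows "expectation Z \<le> K"
proof -
  have "expectation Z \<le> expectation (\<lambda>\<omega>. K * (1 + D * (Y \<omega> - y\<^sub>1)))"
    using assms(1-3) by (intro integral_mono_AE) auto
  also have "\<dots> = K + K * D * (expectation Y - y\<^sub>1)"
    using assms(1) by (simp add: prob_space algebra_simps)
  also have "\<dots> \<le> K"
    using assms(4,5) by (simp add: mult_nonneg_nonpos)
  finally show ?thesis .
qed

lemma exp_quadratic_below_exp_tangent: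
  fixes \<eta> \<gamma> c \<epsilon> :: real
  assumes "0 < \<eta>" "\<eta> \<le> \<gamma>" "0 \<le> c"
    and "c \<le> (sqrt (2 * \<bar>2 * \<eta> - \<gamma>\<bar> + \<gamma>\<^sup>2 + 1) - \<bar>2 * \<eta> - \<gamma>\<bar> - 1) / (4 * \<eta>\<^sup>2)"
    and \<epsilon>: "\<bar>\<epsilon>\<bar> \<le> 1"
  obtains D where "0 \<le> D"
    and "\<And>x. \<bar>x\<bar> \<le> 1 \<Longrightarrow> exp (c * \<eta>\<^sup>2 * x\<^sup>2 - \<eta> * x)
      \<le> exp (c * \<eta>\<^sup>2 * \<epsilon>\<^sup>2 + \<eta> * \<epsilon>) * (1 + D * (exp (- \<gamma> * x) - exp (\<gamma> * \<epsilon>)))"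
proof -
  have \<gamma>: "0 < \<gamma>" using assms(1,2) by simp
  define A where "A = c * \<eta>\<^sup>2 / \<gamma>\<^sup>2"
  define B where "B = \<eta> / \<gamma>"
  define y\<^sub>1 where "y\<^sub>1 = exp (\<gamma> * \<epsilon>)"
  define D where "D = (2 * A * ln y\<^sub>1 + B) / y\<^sub>1"
  have concave: "(2 * A * t + B)\<^sup>2 + 2 * A \<le> 2 * A * t + B"
    if "ln (exp (- \<gamma>)) \<le> t" "t \<le> ln (exp \<gamma>)" for t
    using concavity_condition[OF assms(1-4)] that by (simp add: A_def B_def abs_le_iff)
  have scaled: "\<bar>\<gamma> * x\<bar> \<le> \<gamma>" if "\<bar>x\<bar> \<le> 1" for x
    using that \<gamma> by (simp add: abs_mult mult_left_le)
  have in_range: "exp (\<gamma> * x) \<in> {exp (- \<gamma>)..exp \<gamma>}" if "\<bar>x\<bar> \<le> 1" for x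
    using scaled[OF that] by (simp add: abs_le_iff)
  have y\<^sub>1: "y\<^sub>1 \<in> {exp (- \<gamma>)..exp \<gamma>}"
    unfolding y\<^sub>1_def using \<epsilon> by (rule in_range)
  show ?thesis
  proof
    have "(2 * A * ln y\<^sub>1 + B)\<^sup>2 \<le> 2 * A * ln y\<^sub>1 + B - 2 * A"
      using concave[of "\<gamma> * \<epsilon>"] scaled[OF \<epsilon>] by (simp add: y\<^sub>1_def abs_le_iff)
    moreover have "0 \<le> A" using assms(3) by (simp add: A_def)
    ultimately have "0 \<le> 2 * A * ln y\<^sub>1 + B"
      by (smt (verit) zero_le_power2)
    then show "0 \<le> D"
      by (simp add: D_def y\<^sub>1_def)
  next
    fix x :: real
    assume "\<bar>x\<bar> \<le> 1"
    then have "exp (- \<gamma> * x) \<in> {exp (- \<gamma>)..exp \<gamma>}"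
      using in_range[of "- x"] by simp
    from exp_quadratic_ln_below_tangent[OF exp_gt_zero concave this y\<^sub>1]
    show "exp (c * \<eta>\<^sup>2 * x\<^sup>2 - \<eta> * x)
      \<le> exp (c * \<eta>\<^sup>2 * \<epsilon>\<^sup>2 + \<eta> * \<epsilon>) * (1 + D * (exp (- \<gamma> * x) - exp (\<gamma> * \<epsilon>)))"
      using \<gamma> by (simp add: y\<^sub>1_def D_def A_def B_def field_simps power2_eq_square)
  qed
qed

theorem mainTheorem12:
  fixes M :: "'a measure" and X :: "'a \<Rightarrow> real"
    and \<eta> \<gamma> c \<epsilon> :: real
  assumes "prob_space M"
    and "X \<in> borel_measurable M"
    and "AE \<omega> in M. X \<omega> \<in> {-1..1}"
    and "0 < \<eta>" and "\<eta> \<le> \<gamma>"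
    and "0 \<le> c"
    and "c \<le> (sqrt (2 * \<bar>2 * \<eta> - \<gamma>\<bar> + \<gamma>\<^sup>2 + 1) - \<bar>2 * \<eta> - \<gamma>\<bar> - 1) / (4 * \<eta>\<^sup>2)"
    and "\<epsilon> \<in> {-1..1}"
    and "prob_space.expectation M (\<lambda>\<omega>. exp (- \<gamma> * X \<omega>)) \<le> exp (\<gamma> * \<epsilon>)"
  shows "prob_space.expectation M (\<lambda>\<omega>. exp (c * \<eta>\<^sup>2 * (X \<omega>)\<^sup>2 - \<eta> * X \<omega>))
           \<le> exp (c * \<eta>\<^sup>2 * \<epsilon>\<^sup>2 + \<eta> * \<epsilon>)"
proof -
  interpret prob_space M by fact
  have "\<bar>\<epsilon>\<bar> \<le> 1" using assms(8) by auto
  then obtain D where "0 \<le> D" and below: "\<And>x. \<bar>x\<bar> \<le> 1 \<Longrightarrow> exp (c * \<eta>\<^sup>2 * x\<^sup>2 - \<eta> * x)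
      \<le> exp (c * \<eta>\<^sup>2 * \<epsilon>\<^sup>2 + \<eta> * \<epsilon>) * (1 + D * (exp (- \<gamma> * x) - exp (\<gamma> * \<epsilon>)))"
    using exp_quadratic_below_exp_tangent[OF assms(4-7)] by blast
  have "AE \<omega> in M. exp (c * \<eta>\<^sup>2 * (X \<omega>)\<^sup>2 - \<eta> * X \<omega>)
      \<le> exp (c * \<eta>\<^sup>2 * \<epsilon>\<^sup>2 + \<eta> * \<epsilon>) * (1 + D * (exp (- \<gamma> * X \<omega>) - exp (\<gamma> * \<epsilon>)))"
    using assms(3) by eventually_elim (intro below, simp add: abs_le_iff)
  moreover have "integrable M (\<lambda>\<omega>. exp (- \<gamma> * X \<omega>))"
    "integrable M (\<lambda>\<omega>. exp (c * \<eta>\<^sup>2 * (X \<omega>)\<^sup>2 - \<eta> * X \<omega>))"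
    by (rule integrable_continuous_of_bounded[OF assms(2,3)]; intro continuous_intros)+
  moreover have "0 \<le> exp (c * \<eta>\<^sup>2 * \<epsilon>\<^sup>2 + \<eta> * \<epsilon>) * D"
    using \<open>0 \<le> D\<close> by simp
  ultimately show ?thesis
    using expectation_le_of_AE_le_tangent assms(9) by blast
qed

end
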